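(* Fix $Q_1>Q>0$ and let $\Omega_{Q_1}=\{(x,y): x\log x\le y\le x\log x+Q_1x\}$. Then for every interval $I$ and every weight $w$ on $I$ with $[w]_{RH_1,I}<Q$ there are two intervals $I^-$ and $I^+$ with $I=I^-\cup I^+$ such that, setting $x^{\pm}=\big(\langle w\rangle_{I^\pm},\langle w\log w\rangle_{I^\pm}\big)$, the closed line segment $[x^-,x^+]$ is contained in $\Omega_{Q_1}$. Moreover the parameters $\alpha^\pm=|I^\pm|/|I|$ can be taken separated from $0$ and $1$ uniformly with respect to $w$.
   Context: $\langle f\rangle_J=\frac1{|J|}\int_J f$. For a weight $w$ (a.e. positive, locally integrable) on an interval $I$, $[w]_{RH_1,I}=\sup_{J\subset I}\Big\langle \frac{w}{\langle w\rangle_J}\log\frac{w}{\langle w\rangle_J}\Big\rangle_J$, supremum over subintervals $J$ of $I$. *)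

theory Defs
  imports "HOL-Analysis.Analysis"
begin

definition avg :: "real \<Rightarrow> real \<Rightarrow> (real \<Rightarrow> real) \<Rightarrow> real" where
  "avg a b f = (LINT x:{a..b}|lborel. f x) / (b - a)"

definition is_weight :: "real \<Rightarrow> real \<Rightarrow> (real \<Rightarrow> real) \<Rightarrow> bool" where
  "is_weight a b w \<longleftrightarrow> a < b \<and> set_integrable lborel {a..b} w \<and>
     (AE x in lborel. x \<in> {a..b} \<longrightarrow> w x > 0)"

definition rh1_char :: "real \<Rightarrow> real \<Rightarrow> (real \<Rightarrow> real) \<Rightarrow> ereal" where
  "rh1_char a b w = (SUP J \<in> {(c, d). a \<le> c \<and> c < d \<and> d \<le> b}.
     ereal (avg (fst J) (snd J)
       (\<lambda>x. w x / avg (fst J) (snd J) w * ln (w x / avg (fst J) (snd J) w))))"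

definition Omega :: "real \<Rightarrow> (real \<times> real) set" where
  "Omega Q1 = {(x, y). x * ln x \<le> y \<and> y \<le> x * ln x + Q1 * x}"

end

theory Submission
  imports Defs
begin

(* Let X = <w>_I and, for J \<subseteq> I, let D(J) = \<integral>_J (w ln w - (1 + ln X) w + X) \<ge> 0 be the
   integrated Bregman divergence of t ln t at X.  A point (x, y) with x ln x \<le> y and
   y - (1 + ln X) x + X \<le> Q1 x lies in Omega Q1 (tangent line at X), and these points form a
   convex set; so it suffices to cut I = [a, b] at some s with D(J) \<le> Q1 \<integral>_J w for both halves J.
   With F(s) = Q1 \<integral>_a^s w - D([a, s]) this reads 0 \<le> F(s) \<le> F(b).  The RH_1 bound on I itself is
   D(I) < Q X |I|, whence F(b) > (Q1 - Q) X |I|.  Young's inequality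
   \<tau> t \<le> t ln t - (1 + ln X) t + X e^\<tau> shows that for \<tau> \<ge> 2 Q Q1 / (Q1 - Q) and \<delta> = Q e^-\<tau> an
   interval of length \<delta> |I| carries mass below (Q1 - Q) X |I| / Q1, so F(a + \<delta> |I|) < F(b) and
   F(b - \<delta> |I|) > 0, and the intermediate value theorem provides s. *)

lemma xlnx_ge_tangent:
  fixes t c :: real
  assumes "0 < t" "0 < c"
  shows "(1 + ln c) * t - c \<le> t * ln t"
proof -
  have "ln (c / t) \<le> c / t - 1" using assms by (intro ln_le_minus_one) auto
  then have "t * ln (c / t) \<le> c - t" using assms by (simp add: field_simps)
  then show ?thesis using assms by (simp add: ln_div algebra_simps)
qed

lemma convex_on_xlnx: "convex_on {0<..} (\<lambda>x::real. x * ln x)"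
  by (rule convex_on_realI[where f' = "\<lambda>x. ln x + 1"])
     (auto intro!: derivative_eq_intros simp: field_simps)

definition tangent_strip :: "real \<Rightarrow> real \<Rightarrow> (real \<times> real) set" where
  "tangent_strip X Q1 = {(x, y). 0 < x \<and> x * ln x \<le> y \<and> y - (1 + ln X) * x + X \<le> Q1 * x}"

lemma convex_tangent_strip: "convex (tangent_strip X Q1)"
proof -
  have "tangent_strip X Q1 = epigraph {0<..} (\<lambda>x. x * ln x) \<inter>
      {z. inner (- (Q1 + 1 + ln X), 1) z \<le> - X}"
    by (auto simp: tangent_strip_def epigraph_def algebra_simps)
  then show ?thesis
    by (simp add: convex_Int convex_epigraphI convex_on_xlnx convex_halfspace_le)
qed

lemma tangent_strip_subset_Omega:
  assumes "0 < X"
  shows "tangent_strip X Q1 \<subseteq> Omega Q1"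
  using xlnx_ge_tangent[OF _ assms] by (force simp: tangent_strip_def Omega_def algebra_simps)

lemma set_integrable_const_atLeastAtMost:
  "set_integrable lborel {p..q::real} (\<lambda>_. c :: real)"
  by (rule borel_integrable_atLeastAtMost') auto

lemma set_integral_atLeastAtMost_split:
  fixes f :: "real \<Rightarrow> real"
  assumes f: "set_integrable lborel {a..b} f" and "a \<le> p" "p \<le> c" "c \<le> q" "q \<le> b"
  shows "(LINT x:{p..q}|lborel. f x) = (LINT x:{p..c}|lborel. f x) + (LINT x:{c..q}|lborel. f x)"
proof -
  have int: "set_integrable lborel {s..t} f" if "a \<le> s" "t \<le> b" for s t
    by (rule set_integrable_subset[OF f]) (use that in auto)
  have "f integrable_on {p..q}"
    using set_borel_integral_eq_integral(1)[OF int] assms by auto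
  then have "integral {p..c} f + integral {c..q} f = integral {p..q} f"
    using assms by (intro Henstock_Kurzweil_Integration.integral_combine) auto
  then show ?thesis
    using assms by (simp add: set_borel_integral_eq_integral(2)[OF int])
qed

lemma continuous_on_set_integral_atLeastAtMost:
  fixes f :: "real \<Rightarrow> real"
  assumes f: "set_integrable lborel {a..b} f"
  shows "continuous_on {a..b} (\<lambda>s. LINT x:{a..s}|lborel. f x)"
proof -
  have "continuous_on {a..b} (\<lambda>s. integral {a..s} f)"
    using set_borel_integral_eq_integral(1)[OF f] by (rule indefinite_integral_continuous_1)
  moreover have "integral {a..s} f = (LINT x:{a..s}|lborel. f x)" if "s \<in> {a..b}" for s
    using that by (intro set_borel_integral_eq_integral(2)[symmetric] set_integrable_subset[OF f]) auto
  ultimately show ?thesis by (rule continuous_on_eq)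
qed

lemma set_integral_pos_AE:
  fixes f :: "real \<Rightarrow> real"
  assumes f: "set_integrable lborel A f" and pos: "AE x\<in>A in lborel. 0 < f x"
    and A: "A \<in> sets lborel" "emeasure lborel A \<noteq> 0"
  shows "0 < (LINT x:A|lborel. f x)"
proof -
  let ?g = "\<lambda>x. indicator A x *\<^sub>R f x"
  have g: "integrable lborel ?g" using f unfolding set_integrable_def .
  have nonneg: "AE x in lborel. 0 \<le> ?g x"
    using pos by eventually_elim (auto simp: indicator_def)
  show ?thesis
  proof (rule ccontr)
    assume "\<not> ?thesis"
    then have "integral\<^sup>L lborel ?g = 0"
      using integral_nonneg_AE[OF nonneg] unfolding set_lebesgue_integral_def by simp
    then have "AE x in lborel. ?g x = 0"
      using integral_nonneg_eq_0_iff_AE[OF g nonneg] by simp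
    then have "AE x in lborel. x \<notin> A"
      using pos by eventually_elim (auto simp: indicator_def)
    then show False
      using A AE_iff_measurable[of A lborel "\<lambda>x. x \<notin> A"] by auto
  qed
qed

lemma borel_measurable_indicator_scaleR_comp:
  fixes w h :: "real \<Rightarrow> real"
  assumes w: "set_integrable lborel A w" and h: "h \<in> borel_measurable borel" "h 0 = 0"
  shows "(\<lambda>x. indicator A x *\<^sub>R h (w x)) \<in> borel_measurable lborel"
proof -
  have "(\<lambda>x. indicator A x *\<^sub>R w x) \<in> borel_measurable lborel"
    using w unfolding set_integrable_def by (rule borel_measurable_integrable)
  moreover have "(\<lambda>x. indicator A x *\<^sub>R h (w x)) = (\<lambda>x. h (indicator A x *\<^sub>R w x))"
    using h(2) by (intro ext) (simp split: split_indicator)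
  ultimately show ?thesis using h(1) by (simp add: measurable_compose)
qed

lemma IVT_exists_value_in:
  fixes F :: "real \<Rightarrow> real"
  assumes "continuous_on {f..e} F" "f \<le> e" "F f \<le> M" "0 \<le> F e" "0 \<le> M"
  shows "\<exists>s\<in>{f..e}. F s \<in> {0..M}"
proof (cases "0 \<le> F f")
  case False
  then obtain s where "s \<in> {f..e}" "F s = 0"
    using IVT'[of F f 0 e] assms by auto
  then show ?thesis using assms by (intro bexI[of _ s]) auto
qed (use assms in auto)

lemma cut_fraction_lt_half:
  fixes Q Q1 \<tau> \<delta> :: real
  assumes Q: "0 < Q" "Q < Q1" and \<tau>: "2 * Q * Q1 \<le> \<tau> * (Q1 - Q)" and \<delta>: "0 < \<delta>" "\<delta> * exp \<tau> \<le> Q"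
  shows "\<delta> < 1 / 2"
proof -
  have "2 * Q * (Q1 - Q) < 2 * Q * Q1" using Q by simp
  then have "2 * Q * (Q1 - Q) < \<tau> * (Q1 - Q)" using \<tau> by linarith
  then have "2 * Q < \<tau>" using Q by simp
  then have "2 * Q < exp \<tau>" using exp_ge_add_one_self[of \<tau>] by linarith
  then have "\<delta> * (2 * Q) < \<delta> * exp \<tau>" using \<delta> by simp
  then have "(2 * \<delta>) * Q < 1 * Q" using \<delta>(2) by linarith
  then show ?thesis using Q by (simp only: mult_less_cancel_right_pos)
qed

locale weight_with_entropy =
  fixes a b :: real and w :: "real \<Rightarrow> real"
  assumes weight: "is_weight a b w"
    and xlnx_integrable: "set_integrable lborel {a..b} (\<lambda>x. w x * ln (w x))"
begin

lemma a_less_b: "a < b"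
  and w_integrable: "set_integrable lborel {a..b} w"
  and w_pos_AE: "AE x in lborel. x \<in> {a..b} \<longrightarrow> 0 < w x"
  using weight by (auto simp: is_weight_def)

definition mass :: "real \<Rightarrow> real \<Rightarrow> real" where
  "mass p q = (LINT x:{p..q}|lborel. w x)"

definition entropy :: "real \<Rightarrow> real \<Rightarrow> real" where
  "entropy p q = (LINT x:{p..q}|lborel. w x * ln (w x))"

(* \<integral>_p^q of the Bregman divergence t ln t - (1 + ln c) t + c \<ge> 0 of t ln t at c, taken at t = w *)
definition deviation :: "real \<Rightarrow> real \<Rightarrow> real \<Rightarrow> real" where
  "deviation c p q = entropy p q - (1 + ln c) * mass p q + c * (q - p)"

lemma mass_pos:
  assumes "a \<le> p" "p < q" "q \<le> b"
  shows "0 < mass p q"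
  unfolding mass_def
proof (rule set_integral_pos_AE)
  show "set_integrable lborel {p..q} w"
    by (rule set_integrable_subset[OF w_integrable]) (use assms in auto)
  show "AE x\<in>{p..q} in lborel. 0 < w x"
    using w_pos_AE by eventually_elim (use assms in auto)
qed (use assms in auto)

lemma mass_eq_avg: "mass a b = avg a b w * (b - a)"
  using a_less_b by (simp add: avg_def mass_def)

lemma avg_pos: "0 < avg a b w"
  using mass_pos[of a b] a_less_b by (simp add: mass_eq_avg zero_less_mult_iff)

lemma mass_split:
  assumes "a \<le> p" "p \<le> c" "c \<le> q" "q \<le> b"
  shows "mass p q = mass p c + mass c q"
  unfolding mass_def by (rule set_integral_atLeastAtMost_split[OF w_integrable assms])

lemma deviation_split:
  assumes "a \<le> p" "p \<le> c" "c \<le> q" "q \<le> b"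
  shows "deviation X p q = deviation X p c + deviation X c q"
  using mass_split[OF assms] set_integral_atLeastAtMost_split[OF xlnx_integrable assms]
  by (simp add: deviation_def entropy_def algebra_simps)

lemma affine_le_entropy:
  assumes "a \<le> p" "p \<le> q" "q \<le> b" and affine_le: "\<And>t. 0 < t \<Longrightarrow> \<alpha> * t + \<gamma> \<le> t * ln t"
  shows "\<alpha> * mass p q + \<gamma> * (q - p) \<le> entropy p q"
proof -
  have w: "set_integrable lborel {p..q} w"
    and v: "set_integrable lborel {p..q} (\<lambda>x. w x * ln (w x))"
    using assms by (auto intro: set_integrable_subset[OF w_integrable] set_integrable_subset[OF xlnx_integrable])
  have "(LINT x:{p..q}|lborel. \<alpha> * w x + \<gamma>) \<le> (LINT x:{p..q}|lborel. w x * ln (w x))"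
  proof (rule set_integral_mono_AE[OF _ v])
    show "set_integrable lborel {p..q} (\<lambda>x. \<alpha> * w x + \<gamma>)"
      using w set_integrable_const_atLeastAtMost by simp
    show "AE x\<in>{p..q} in lborel. \<alpha> * w x + \<gamma> \<le> w x * ln (w x)"
      using w_pos_AE by eventually_elim (use assms affine_le in auto)
  qed
  then show ?thesis
    using w set_integrable_const_atLeastAtMost assms
    by (simp add: mass_def entropy_def set_integral_const mult.commute)
qed

lemma deviation_nonneg:
  assumes "0 < c" "a \<le> p" "p \<le> q" "q \<le> b"
  shows "0 \<le> deviation c p q"
  using affine_le_entropy[OF assms(2-4), of "1 + ln c" "- c"] xlnx_ge_tangent[OF _ assms(1)]
  by (simp add: deviation_def)

lemma deviation_le_deviation:
  assumes "0 < c" "a \<le> p" "p \<le> q" "q \<le> b"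
  shows "deviation c p q \<le> deviation c a b"
proof -
  have "deviation c a b = deviation c a p + (deviation c p q + deviation c q b)"
    using assms deviation_split[of a p b] deviation_split[of p q b] a_less_b by auto
  moreover have "0 \<le> deviation c a p" "0 \<le> deviation c q b"
    using assms a_less_b by (auto intro: deviation_nonneg)
  ultimately show ?thesis by linarith
qed

lemma mass_le_deviation:
  assumes "0 < c" "a \<le> p" "p \<le> q" "q \<le> b"
  shows "\<tau> * mass p q \<le> deviation c p q + c * (exp \<tau> - 1) * (q - p)"
proof -
  have "(1 + ln (c * exp \<tau>)) * mass p q + (- (c * exp \<tau>)) * (q - p) \<le> entropy p q"
    using assms xlnx_ge_tangent[of _ "c * exp \<tau>"] by (intro affine_le_entropy) auto
  then show ?thesis
    using assms(1) by (simp add: deviation_def ln_mult algebra_simps)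
qed

lemma continuous_on_mass: "continuous_on {a..b} (\<lambda>s. mass a s)"
  unfolding mass_def by (rule continuous_on_set_integral_atLeastAtMost[OF w_integrable])

lemma continuous_on_deviation: "continuous_on {a..b} (\<lambda>s. deviation c a s)"
  unfolding deviation_def mass_def entropy_def
  by (intro continuous_intros continuous_on_set_integral_atLeastAtMost w_integrable xlnx_integrable)

lemma avg_in_tangent_strip:
  assumes "0 < X" "a \<le> p" "p < q" "q \<le> b" and "deviation X p q \<le> Q1 * mass p q"
  shows "(avg p q w, avg p q (\<lambda>x. w x * ln (w x))) \<in> tangent_strip X Q1"
proof -
  define x where "x = mass p q / (q - p)"
  define y where "y = entropy p q / (q - p)"
  have "0 < x" using mass_pos assms by (simp add: x_def)
  have "mass p q = (q - p) * x" "entropy p q = (q - p) * y"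
    using assms by (simp_all add: x_def y_def)
  then have deviation_avg: "deviation c p q = (q - p) * (y - (1 + ln c) * x + c)" for c
    unfolding deviation_def by (simp only:) (simp add: algebra_simps)
  have "0 \<le> (q - p) * (y - x * ln x)"
    using deviation_nonneg[OF \<open>0 < x\<close>, of p q] deviation_avg[of x] assms by (simp add: algebra_simps)
  then have "x * ln x \<le> y"
    using assms by (simp add: zero_le_mult_iff)
  moreover have "y - (1 + ln X) * x + X \<le> Q1 * x"
    using assms(5) deviation_avg[of X] assms \<open>mass p q = (q - p) * x\<close> by simp
  moreover have "avg p q w = x" "avg p q (\<lambda>t. w t * ln (w t)) = y"
    by (simp_all add: avg_def x_def y_def mass_def entropy_def)
  ultimately show ?thesis
    using \<open>0 < x\<close> by (simp add: tangent_strip_def)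
qed

lemma avg_rescaled_xlnx:
  assumes "0 < c"
  shows "avg a b (\<lambda>x. w x / c * ln (w x / c)) = (entropy a b - ln c * mass a b) / (c * (b - a))"
proof -
  let ?rescaled = "\<lambda>t. t / c * ln (t / c)"
  let ?affine = "\<lambda>x. (1 / c) * (w x * ln (w x)) - (ln c / c) * w x"
  have affine_integrable: "set_integrable lborel {a..b} ?affine"
    using w_integrable xlnx_integrable by simp
  have "(LINT x:{a..b}|lborel. ?rescaled (w x)) = (LINT x:{a..b}|lborel. ?affine x)"
    unfolding set_lebesgue_integral_def
  proof (rule integral_cong_AE)
    show "(\<lambda>x. indicator {a..b} x *\<^sub>R ?rescaled (w x)) \<in> borel_measurable lborel"
      by (rule borel_measurable_indicator_scaleR_comp[OF w_integrable]) auto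
    show "(\<lambda>x. indicator {a..b} x *\<^sub>R ?affine x) \<in> borel_measurable lborel"
      using affine_integrable unfolding set_integrable_def by (rule borel_measurable_integrable)
    show "AE x in lborel. indicator {a..b} x *\<^sub>R ?rescaled (w x) = indicator {a..b} x *\<^sub>R ?affine x"
      using w_pos_AE by eventually_elim (use assms in \<open>auto simp: ln_div field_simps split: split_indicator\<close>)
  qed
  also have "\<dots> = (entropy a b - ln c * mass a b) / c"
    using w_integrable xlnx_integrable by (simp add: mass_def entropy_def diff_divide_distrib)
  finally show ?thesis
    using a_less_b by (simp add: avg_def)
qed

lemma deviation_lt_of_rh1_char:
  assumes "rh1_char a b w < ereal Q"
  shows "deviation (avg a b w) a b < Q * avg a b w * (b - a)"
proof -
  define X where "X = avg a b w"
  have mass: "mass a b = X * (b - a)" and "0 < X"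
    using mass_eq_avg avg_pos by (simp_all add: X_def)
  have "ereal (avg a b (\<lambda>x. w x / X * ln (w x / X))) \<le> rh1_char a b w"
    unfolding rh1_char_def X_def using a_less_b by (intro SUP_upper2[of "(a, b)"]) auto
  then have "ereal (avg a b (\<lambda>x. w x / X * ln (w x / X))) < ereal Q"
    using assms by (rule order.strict_trans1)
  then have "avg a b (\<lambda>x. w x / X * ln (w x / X)) < Q"
    by (simp only: less_ereal.simps)
  then have "deviation X a b / (X * (b - a)) < Q"
    using avg_rescaled_xlnx[OF \<open>0 < X\<close>] by (simp add: deviation_def mass algebra_simps)
  then show ?thesis
    using \<open>0 < X\<close> a_less_b by (simp add: X_def divide_less_eq mult.commute mult.left_commute)
qed

lemma mass_lt_on_short_interval:
  assumes Q: "0 < Q" "Q < Q1" and \<tau>: "2 * Q * Q1 \<le> \<tau> * (Q1 - Q)" and \<delta>: "0 < \<delta>" "\<delta> * exp \<tau> \<le> Q"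
    and rh1: "rh1_char a b w < ereal Q"
    and pq: "a \<le> p" "p \<le> q" "q \<le> b" "q - p = \<delta> * (b - a)"
  shows "Q1 * mass p q < (Q1 - Q) * (avg a b w * (b - a))"
proof -
  define X where "X = avg a b w"
  define L where "L = b - a"
  have "0 < L" using a_less_b by (simp add: L_def)
  have "0 < X" using avg_pos by (simp add: X_def)
  have "deviation X p q \<le> deviation X a b"
    using \<open>0 < X\<close> pq(1-3) by (rule deviation_le_deviation)
  also have "\<dots> < Q * X * L"
    using deviation_lt_of_rh1_char[OF rh1] by (simp add: X_def L_def)
  finally have deviation_lt: "deviation X p q < Q * X * L" .
  have "X * (exp \<tau> - 1) * (q - p) = X * L * (\<delta> * exp \<tau>) - X * L * \<delta>"
    unfolding pq(4) by (simp add: L_def algebra_simps)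
  also have "\<dots> < X * L * Q"
  proof -
    have "X * L * (\<delta> * exp \<tau>) \<le> X * L * Q" "0 < X * L * \<delta>"
      using \<delta> \<open>0 < X\<close> \<open>0 < L\<close> by (simp_all add: mult_left_mono)
    then show ?thesis by linarith
  qed
  finally have "\<tau> * mass p q < 2 * Q * (X * L)"
    using mass_le_deviation[OF \<open>0 < X\<close> pq(1-3), of \<tau>] deviation_lt by (simp add: algebra_simps)
  then have "(Q1 - Q) * (\<tau> * mass p q) < (Q1 - Q) * (2 * Q * (X * L))"
    using Q by simp
  moreover have "2 * Q * Q1 * mass p q \<le> \<tau> * (Q1 - Q) * mass p q"
  proof -
    have "0 < q - p" using pq(4) \<delta> a_less_b by simp
    then have "0 < mass p q" using pq by (intro mass_pos) auto
    then show ?thesis using \<tau> by (simp add: mult_right_mono)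
  qed
  ultimately have "2 * Q * (Q1 * mass p q) < 2 * Q * ((Q1 - Q) * (X * L))"
    by (simp add: algebra_simps)
  then show ?thesis
    using Q by (simp add: X_def L_def)
qed

lemma exists_balanced_cut:
  assumes Q: "0 < Q" "Q < Q1" and \<tau>: "2 * Q * Q1 \<le> \<tau> * (Q1 - Q)" and \<delta>: "0 < \<delta>" "\<delta> * exp \<tau> \<le> Q"
    and rh1: "rh1_char a b w < ereal Q"
  shows "\<exists>s. a + \<delta> * (b - a) \<le> s \<and> s \<le> b - \<delta> * (b - a) \<and>
    deviation (avg a b w) a s \<le> Q1 * mass a s \<and> deviation (avg a b w) s b \<le> Q1 * mass s b"
proof -
  define X where "X = avg a b w"
  define F where "F s = Q1 * mass a s - deviation X a s" for s
  define f where "f = a + \<delta> * (b - a)"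
  define e where "e = b - \<delta> * (b - a)"
  have "0 < X" using avg_pos by (simp add: X_def)
  have "0 < \<delta> * (b - a)" "2 * (\<delta> * (b - a)) < b - a"
    using cut_fraction_lt_half[OF Q \<tau> \<delta>] \<delta> a_less_b by simp_all
  then have fe: "a < f" "f < e" "e < b" by (auto simp: f_def e_def)
  have mass_ab: "mass a b = X * (b - a)"
    using mass_eq_avg by (simp add: X_def)
  have "deviation X a b < Q * (X * (b - a))"
    using deviation_lt_of_rh1_char[OF rh1] by (simp add: X_def mult.assoc)
  then have F_b: "(Q1 - Q) * (X * (b - a)) < F b"
    unfolding F_def mass_ab by (simp add: algebra_simps)
  have "F f \<le> Q1 * mass a f"
    using deviation_nonneg[OF \<open>0 < X\<close>, of a f] fe by (simp add: F_def)
  also have "\<dots> < (Q1 - Q) * (X * (b - a))"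
    using fe by (unfold X_def, intro mass_lt_on_short_interval[OF Q \<tau> \<delta> rh1]) (auto simp: f_def)
  finally have F_f: "F f \<le> F b" using F_b by simp
  have "F b - F e = Q1 * mass e b - deviation X e b"
    using mass_split[of a e b] deviation_split[of a e b] fe by (simp add: F_def algebra_simps)
  moreover have "Q1 * mass e b < (Q1 - Q) * (X * (b - a))"
    using fe by (unfold X_def, intro mass_lt_on_short_interval[OF Q \<tau> \<delta> rh1]) (auto simp: e_def)
  moreover have "0 \<le> deviation X e b" using deviation_nonneg[OF \<open>0 < X\<close>, of e b] fe by simp
  ultimately have F_e: "0 \<le> F e" using F_b by linarith
  have "continuous_on {f..e} F"
    unfolding F_def using fe
    by (intro continuous_intros continuous_on_subset[OF continuous_on_mass]
        continuous_on_subset[OF continuous_on_deviation]) auto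
  moreover have "0 \<le> F b"
  proof -
    have "0 < (Q1 - Q) * (X * (b - a))" using Q \<open>0 < X\<close> a_less_b by simp
    with F_b show ?thesis by linarith
  qed
  ultimately obtain s where s: "s \<in> {f..e}" "F s \<in> {0..F b}"
    using IVT_exists_value_in[of f e F "F b"] F_f F_e fe by auto
  have "F b - F s = Q1 * mass s b - deviation X s b"
    using mass_split[of a s b] deviation_split[of a s b] s fe by (simp add: F_def algebra_simps)
  then show ?thesis
    using s by (intro exI[of _ s]) (auto simp: F_def X_def f_def e_def)
qed

end

theorem lemma2:
  fixes Q Q1 :: real
  assumes "0 < Q" and "Q < Q1"
  shows "\<exists>\<delta>>0. \<forall>a b (w :: real \<Rightarrow> real).
           is_weight a b w \<and> set_integrable lborel {a..b} (\<lambda>x. w x * ln (w x)) \<and>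
           rh1_char a b w < ereal Q \<longrightarrow>
           (\<exists>c. a + \<delta> * (b - a) \<le> c \<and> c \<le> b - \<delta> * (b - a) \<and>
              closed_segment (avg a c w, avg a c (\<lambda>x. w x * ln (w x)))
                             (avg c b w, avg c b (\<lambda>x. w x * ln (w x)))
              \<subseteq> Omega Q1)"
proof -
  define \<tau> where "\<tau> = 2 * Q * Q1 / (Q1 - Q)"
  define \<delta> where "\<delta> = Q * exp (- \<tau>)"
  have \<tau>: "2 * Q * Q1 \<le> \<tau> * (Q1 - Q)" and \<delta>: "0 < \<delta>" "\<delta> * exp \<tau> \<le> Q"
    using assms by (simp_all add: \<tau>_def \<delta>_def exp_minus)
  have "\<exists>c. a + \<delta> * (b - a) \<le> c \<and> c \<le> b - \<delta> * (b - a) \<and>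
      closed_segment (avg a c w, avg a c (\<lambda>x. w x * ln (w x)))
                     (avg c b w, avg c b (\<lambda>x. w x * ln (w x))) \<subseteq> Omega Q1"
    if hyps: "is_weight a b w" "set_integrable lborel {a..b} (\<lambda>x. w x * ln (w x))"
      and rh1: "rh1_char a b w < ereal Q"
    for a b w
  proof -
    interpret weight_with_entropy a b w
      using hyps by unfold_locales
    obtain s where s: "a + \<delta> * (b - a) \<le> s" "s \<le> b - \<delta> * (b - a)"
      and left: "deviation (avg a b w) a s \<le> Q1 * mass a s"
      and right: "deviation (avg a b w) s b \<le> Q1 * mass s b"
      using exists_balanced_cut[OF assms \<tau> \<delta> rh1] by blast
    have "0 < \<delta> * (b - a)" using \<delta> a_less_b by simp
    then have "a < s" "s < b" using s by linarith+
    then have "closed_segment (avg a s w, avg a s (\<lambda>x. w x * ln (w x)))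
        (avg s b w, avg s b (\<lambda>x. w x * ln (w x))) \<subseteq> tangent_strip (avg a b w) Q1"
      using avg_pos left right
      by (intro closed_segment_subset convex_tangent_strip avg_in_tangent_strip) auto
    also have "\<dots> \<subseteq> Omega Q1"
      by (rule tangent_strip_subset_Omega[OF avg_pos])
    finally show ?thesis using s by blast
  qed
  then show ?thesis using \<delta>(1) by blast
qed

end
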